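(* Let $p$ be a positive integer, let $\bar J_1,\dots,\bar J_p\in\mathcal{D}(X)$, and let $\bar J(x)=\min_{i=1,\dots,p}\bar J_i(x)$ for all $x\in X$. Then $\bar J\in\mathcal{D}(X)$.
   Context: Setting: $X$ (state space) and $U$ (control space) are sets; for each $x\in X$, $U(x)\subset U$ is nonempty; $f:X\times U\to X$; the stage cost $g$ satisfies $0\le g(x,u)\le\infty$ for all $x\in X$, $u\in U(x)$. $\mathcal{E}^+(X)$ denotes the set of all functions $J:X\to[0,\infty]$. The Bellman operator $T:\mathcal{E}^+(X)\to\mathcal{E}^+(X)$ is $(TJ)(x)=\inf_{u\in U(x)}\{g(x,u)+J(f(x,u))\}$. The region of decreasing is $\mathcal{D}(X)=\{J\in\mathcal{E}^+(X): (TJ)(x)\le J(x)\ \forall x\in X\}$. Standing assumption: for every $J\in\mathcal{E}^+(X)$ and every $x\in X$, the infimum defining $(TJ)(x)$ is attained. *)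

theory Defs
  imports "HOL-Library.Extended_Nonnegative_Real"
begin

text \<open>Functions J : X -> [0,\<infinity>] are modelled as J :: 'x \<Rightarrow> ennreal, where the
state space X is the type 'x. The control constraint U(x) is given by Uc x :: 'u set.\<close>

definition bellman ::
  "('x \<Rightarrow> 'u set) \<Rightarrow> ('x \<Rightarrow> 'u \<Rightarrow> 'x) \<Rightarrow> ('x \<Rightarrow> 'u \<Rightarrow> ennreal) \<Rightarrow> ('x \<Rightarrow> ennreal) \<Rightarrow> ('x \<Rightarrow> ennreal)"
  where "bellman Uc f g J = (\<lambda>x. INF u\<in>Uc x. g x u + J (f x u))"

definition region_decreasing ::
  "('x \<Rightarrow> 'u set) \<Rightarrow> ('x \<Rightarrow> 'u \<Rightarrow> 'x) \<Rightarrow> ('x \<Rightarrow> 'u \<Rightarrow> ennreal) \<Rightarrow> ('x \<Rightarrow> ennreal) set"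
  where "region_decreasing Uc f g = {J. \<forall>x. bellman Uc f g J x \<le> J x}"

end

theory Submission
  imports Defs
begin

text \<open>The Bellman operator is monotone, so a pointwise infimum of functions in the region of
decreasing is mapped below each of them, hence below the infimum itself.\<close>

lemma bellman_mono:
  assumes "\<And>y. J y \<le> J' y"
  shows "bellman Uc f g J x \<le> bellman Uc f g J' x"
  unfolding bellman_def by (intro INF_mono) (use assms add_left_mono in blast)

lemma region_decreasing_INF:
  assumes "\<And>i. i \<in> I \<Longrightarrow> Jb i \<in> region_decreasing Uc f g"
  shows "(\<lambda>x. INF i\<in>I. Jb i x) \<in> region_decreasing Uc f g"
  unfolding region_decreasing_def
proof (intro CollectI allI INF_greatest)
  fix x i
  assume i: "i \<in> I"
  have "bellman Uc f g (\<lambda>y. INF i\<in>I. Jb i y) x \<le> bellman Uc f g (Jb i) x"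
    by (rule bellman_mono) (use i in \<open>rule INF_lower\<close>)
  also have "\<dots> \<le> Jb i x"
    using assms[OF i] unfolding region_decreasing_def by blast
  finally show "bellman Uc f g (\<lambda>y. INF i\<in>I. Jb i y) x \<le> Jb i x" .
qed

theorem proposition3:
  fixes Uc :: "'x \<Rightarrow> 'u set" and f :: "'x \<Rightarrow> 'u \<Rightarrow> 'x" and g :: "'x \<Rightarrow> 'u \<Rightarrow> ennreal"
    and p :: nat and Jb :: "nat \<Rightarrow> 'x \<Rightarrow> ennreal" and J :: "'x \<Rightarrow> ennreal"
  assumes nonempty: "\<And>x. Uc x \<noteq> {}"
    and attained: "\<And>(J' :: 'x \<Rightarrow> ennreal) x. \<exists>u\<in>Uc x. g x u + J' (f x u) = bellman Uc f g J' x"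
    and p_pos: "p \<ge> 1"
    and Jb_dec: "\<And>i. i \<in> {1..p} \<Longrightarrow> Jb i \<in> region_decreasing Uc f g"
    and J_def: "\<And>x. J x = (MIN i\<in>{1..p}. Jb i x)"
  shows "J \<in> region_decreasing Uc f g"
proof -
  have "J = (\<lambda>x. INF i\<in>{1..p}. Jb i x)"
    using p_pos by (intro ext) (simp add: J_def cInf_eq_Min)
  with Jb_dec show ?thesis
    using region_decreasing_INF by metis
qed

end
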